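(* Let $a<b$ be real numbers and let $n\ge 1$. There are infinitely many pairwise nonisomorphic nontrivial topological quandle structures on the closed interval $[a,b]$, and there are infinitely many pairwise nonisomorphic nontrivial topological quandle structures on the open unit ball $B^{\circ}=\{x\in\mathbb{R}^n:\|x\|<1\}$.
   Context: A topological quandle is a topological space $X$ with a continuous map $f:X\times X\to X$ such that for every $y\in X$ the map $R_y:X\to X$, $x\mapsto f(x,y)$, is a homeomorphism, $f(f(x,y),z)=f(f(x,z),f(y,z))$ for all $x,y,z\in X$, and $f(x,x)=x$ for all $x\in X$. The structure is trivial if $f(x,y)=x$ for all $x,y$, and nontrivial otherwise. Two topological quandle structures $f_1,f_2$ on spaces $X_1,X_2$ are isomorphic if there is a homeomorphism $\varphi:X_1\to X_2$ with $\varphi(f_1(x,y))=f_2(\varphi(x),\varphi(y))$ for all $x,y\in X_1$. *)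

theory Defs
  imports "HOL-Analysis.Analysis"
begin

definition topological_quandle :: "'a::topological_space set \<Rightarrow> ('a \<Rightarrow> 'a \<Rightarrow> 'a) \<Rightarrow> bool" where
  "topological_quandle X f \<longleftrightarrow>
     (\<forall>x\<in>X. \<forall>y\<in>X. f x y \<in> X) \<and>
     continuous_on (X \<times> X) (\<lambda>(x, y). f x y) \<and>
     (\<forall>y\<in>X. \<exists>g. homeomorphism X X (\<lambda>x. f x y) g) \<and>
     (\<forall>x\<in>X. \<forall>y\<in>X. \<forall>z\<in>X. f (f x y) z = f (f x z) (f y z)) \<and>
     (\<forall>x\<in>X. f x x = x)"

definition nontrivial_quandle :: "'a set \<Rightarrow> ('a \<Rightarrow> 'a \<Rightarrow> 'a) \<Rightarrow> bool" where
  "nontrivial_quandle X f \<longleftrightarrow> (\<exists>x\<in>X. \<exists>y\<in>X. f x y \<noteq> x)"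

definition quandle_isomorphic ::
  "'a::topological_space set \<Rightarrow> ('a \<Rightarrow> 'a \<Rightarrow> 'a) \<Rightarrow> 'b::topological_space set \<Rightarrow> ('b \<Rightarrow> 'b \<Rightarrow> 'b) \<Rightarrow> bool" where
  "quandle_isomorphic X1 f1 X2 f2 \<longleftrightarrow>
     (\<exists>\<phi> \<psi>. homeomorphism X1 X2 \<phi> \<psi> \<and>
        (\<forall>x\<in>X1. \<forall>y\<in>X1. \<phi> (f1 x y) = f2 (\<phi> x) (\<phi> y)))"

end

theory Submission
  imports Defs "HOL-Library.Function_Algebras"
begin

(*
  If an abelian group G acts continuously on X by a flow \<Phi>, and \<tau> : X \<rightarrow> G is a "time"
  function that is constant along orbits, satisfies \<Phi> (\<tau> x) x = x and makes
  (x, y) \<mapsto> \<Phi> (\<tau> y) x continuous, then x \<triangleleft> y = \<Phi> (\<tau> y) x is a topological quandle: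
  right distributivity is commutativity of the flow together with the invariance of \<tau>.

  On the line, let the i-th coordinate of a time vector in \<real>^k drive the logistic flow on the
  interval (2i, 2i+1), and let the time of y be a tent function of y supported on
  (2i+1, 2i+2). The set of y whose translation moves a given x is then empty or one of these
  k control intervals, so the quandle has exactly k + 1 such moving sets. Their number is an
  isomorphism invariant, and a nonempty one witnesses nontriviality. Restricting to [0, 2k]
  and transporting to [a, b], or acting on one coordinate of \<real>^n and transporting to the
  open ball, which is homeomorphic to \<real>^n, gives the two infinite families.
*)

section \<open>Moving sets\<close>

definition moving_set :: "'a set \<Rightarrow> ('a \<Rightarrow> 'a \<Rightarrow> 'a) \<Rightarrow> 'a \<Rightarrow> 'a set" where
  "moving_set X f x = {y \<in> X. f x y \<noteq> x}"

definition moving_sets :: "'a set \<Rightarrow> ('a \<Rightarrow> 'a \<Rightarrow> 'a) \<Rightarrow> 'a set set" where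
  "moving_sets X f = moving_set X f ` X"

lemma moving_set_homomorphism:
  assumes inj: "inj_on \<phi> X1" and closed: "\<forall>x\<in>X1. \<forall>y\<in>X1. f1 x y \<in> X1"
    and hom: "\<forall>x\<in>X1. \<forall>y\<in>X1. \<phi> (f1 x y) = f2 (\<phi> x) (\<phi> y)" and "x \<in> X1"
  shows "moving_set (\<phi> ` X1) f2 (\<phi> x) = \<phi> ` moving_set X1 f1 x"
proof -
  have "f2 (\<phi> x) (\<phi> y) \<noteq> \<phi> x \<longleftrightarrow> f1 x y \<noteq> x" if "y \<in> X1" for y
    using that \<open>x \<in> X1\<close> hom closed inj_on_eq_iff[OF inj] by metis
  then show ?thesis unfolding moving_set_def by auto
qed

lemma card_moving_sets_isomorphic:
  assumes "quandle_isomorphic X1 f1 X2 f2" and closed: "\<forall>x\<in>X1. \<forall>y\<in>X1. f1 x y \<in> X1"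
  shows "card (moving_sets X2 f2) = card (moving_sets X1 f1)"
proof -
  obtain \<phi> \<psi> where h: "homeomorphism X1 X2 \<phi> \<psi>"
    and hom: "\<forall>x\<in>X1. \<forall>y\<in>X1. \<phi> (f1 x y) = f2 (\<phi> x) (\<phi> y)"
    using assms(1) unfolding quandle_isomorphic_def by blast
  have X2: "X2 = \<phi> ` X1" and inj: "inj_on \<phi> X1"
    using h unfolding homeomorphism_def by (auto intro: inj_on_inverseI)
  have "moving_sets X2 f2 = image \<phi> ` moving_sets X1 f1"
    unfolding moving_sets_def X2 image_image
    using moving_set_homomorphism[OF inj closed hom] by (intro image_cong) auto
  moreover have "inj_on (image \<phi>) (moving_sets X1 f1)"
    by (rule inj_on_subset[OF inj_on_image_Pow[OF inj]]) (auto simp: moving_sets_def moving_set_def)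
  ultimately show ?thesis by (simp add: card_image)
qed

lemma nontrivial_quandle_if_card_moving_sets:
  assumes "2 \<le> card (moving_sets X f)"
  shows "nontrivial_quandle X f"
proof (rule ccontr)
  assume "\<not> nontrivial_quandle X f"
  then have "moving_set X f x = {}" if "x \<in> X" for x
    using that unfolding nontrivial_quandle_def moving_set_def by blast
  then have "moving_sets X f \<subseteq> {{}}"
    unfolding moving_sets_def by blast
  then have "card (moving_sets X f) \<le> 1"
    using card_mono[of "{{}}" "moving_sets X f"] by simp
  with assms show False by simp
qed

lemma topological_quandle_transport:
  assumes h: "homeomorphism X Y \<phi> \<psi>" and q: "topological_quandle X f"
  shows "topological_quandle Y (\<lambda>x y. \<phi> (f (\<psi> x) (\<psi> y)))"
    and "quandle_isomorphic X f Y (\<lambda>x y. \<phi> (f (\<psi> x) (\<psi> y)))"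
proof -
  have closed: "\<And>x y. x \<in> X \<Longrightarrow> y \<in> X \<Longrightarrow> f x y \<in> X"
    and cont: "continuous_on (X \<times> X) (\<lambda>(x, y). f x y)"
    and transl: "\<And>y. y \<in> X \<Longrightarrow> \<exists>g. homeomorphism X X (\<lambda>x. f x y) g"
    and distrib: "\<And>x y z. x \<in> X \<Longrightarrow> y \<in> X \<Longrightarrow> z \<in> X \<Longrightarrow> f (f x y) z = f (f x z) (f y z)"
    and idem: "\<And>x. x \<in> X \<Longrightarrow> f x x = x"
    using q unfolding topological_quandle_def by blast+
  have \<psi>: "\<And>y. y \<in> Y \<Longrightarrow> \<psi> y \<in> X" and \<phi>: "\<And>x. x \<in> X \<Longrightarrow> \<phi> x \<in> Y"
    and \<psi>\<phi>: "\<And>x. x \<in> X \<Longrightarrow> \<psi> (\<phi> x) = x" and \<phi>\<psi>: "\<And>y. y \<in> Y \<Longrightarrow> \<phi> (\<psi> y) = y"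
    and cont_\<phi>: "continuous_on X \<phi>" and cont_\<psi>: "continuous_on Y \<psi>"
    using h unfolding homeomorphism_def by auto
  show "topological_quandle Y (\<lambda>x y. \<phi> (f (\<psi> x) (\<psi> y)))"
    unfolding topological_quandle_def
  proof (intro conjI ballI)
    have "continuous_on (Y \<times> Y) (\<lambda>p. (\<psi> (fst p), \<psi> (snd p)))"
      by (intro continuous_intros continuous_on_compose2[OF cont_\<psi>]) auto
    moreover have "(\<lambda>p. (\<psi> (fst p), \<psi> (snd p))) ` (Y \<times> Y) \<subseteq> X \<times> X"
      using \<psi> by auto
    ultimately have "continuous_on (Y \<times> Y) (\<lambda>p. f (\<psi> (fst p)) (\<psi> (snd p)))"
      using continuous_on_compose2[OF cont] by fastforce
    moreover have "(\<lambda>p. f (\<psi> (fst p)) (\<psi> (snd p))) ` (Y \<times> Y) \<subseteq> X"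
      using \<psi> closed by auto
    ultimately show "continuous_on (Y \<times> Y) (\<lambda>(x, y). \<phi> (f (\<psi> x) (\<psi> y)))"
      using continuous_on_compose2[OF cont_\<phi>] by (simp add: case_prod_unfold)
  next
    fix y assume "y \<in> Y"
    then obtain g where "homeomorphism X X (\<lambda>x. f x (\<psi> y)) g" using transl \<psi> by blast
    then have "homeomorphism Y Y (\<phi> \<circ> ((\<lambda>x. f x (\<psi> y)) \<circ> \<psi>)) ((\<phi> \<circ> g) \<circ> \<psi>)"
      by (intro homeomorphism_compose[OF homeomorphism_compose[OF homeomorphism_symD[OF h]] h])
    then show "\<exists>g. homeomorphism Y Y (\<lambda>x. \<phi> (f (\<psi> x) (\<psi> y))) g" by (auto simp: o_def)
  next
    fix x y z assume "x \<in> Y" "y \<in> Y" "z \<in> Y"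
    then show "\<phi> (f (\<psi> (\<phi> (f (\<psi> x) (\<psi> y)))) (\<psi> z)) =
        \<phi> (f (\<psi> (\<phi> (f (\<psi> x) (\<psi> z)))) (\<psi> (\<phi> (f (\<psi> y) (\<psi> z)))))"
      using distrib[of "\<psi> x" "\<psi> y" "\<psi> z"] by (simp add: \<psi> \<psi>\<phi> closed)
  qed (auto simp: \<psi> \<phi> \<phi>\<psi> closed idem)
  show "quandle_isomorphic X f Y (\<lambda>x y. \<phi> (f (\<psi> x) (\<psi> y)))"
    unfolding quandle_isomorphic_def using h \<psi>\<phi> by (intro exI[of _ \<phi>] exI[of _ \<psi>]) simp
qed

lemma homeomorphic_topological_quandle:
  assumes "X homeomorphic Y" and q: "topological_quandle X f"
  obtains g where "topological_quandle Y g" and "card (moving_sets Y g) = card (moving_sets X f)"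
proof -
  obtain \<phi> \<psi> where h: "homeomorphism X Y \<phi> \<psi>"
    using assms(1) unfolding homeomorphic_def by blast
  have closed: "\<forall>x\<in>X. \<forall>y\<in>X. f x y \<in> X"
    using q unfolding topological_quandle_def by blast
  show ?thesis
    by (rule that[OF topological_quandle_transport(1)[OF h q]
          card_moving_sets_isomorphic[OF topological_quandle_transport(2)[OF h q] closed]])
qed

lemma nonisomorphic_topological_quandles:
  fixes X :: "'a::topological_space set"
  assumes "\<And>k. \<exists>f. topological_quandle X f \<and> card (moving_sets X f) = k + 2"
  shows "\<exists>F :: nat \<Rightarrow> 'a \<Rightarrow> 'a \<Rightarrow> 'a.
           (\<forall>i. topological_quandle X (F i) \<and> nontrivial_quandle X (F i)) \<and>
           (\<forall>i j. i \<noteq> j \<longrightarrow> \<not> quandle_isomorphic X (F i) X (F j))"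
proof -
  obtain F where q: "\<And>k. topological_quandle X (F k)"
    and card: "\<And>k. card (moving_sets X (F k)) = k + 2"
    using assms by metis
  have "nontrivial_quandle X (F k)" for k
    by (intro nontrivial_quandle_if_card_moving_sets) (simp add: card)
  moreover have "\<not> quandle_isomorphic X (F i) X (F j)" if "i \<noteq> j" for i j
  proof
    assume "quandle_isomorphic X (F i) X (F j)"
    moreover have "\<forall>x\<in>X. \<forall>y\<in>X. F i x y \<in> X"
      using q[of i] unfolding topological_quandle_def by blast
    ultimately have "card (moving_sets X (F j)) = card (moving_sets X (F i))"
      by (rule card_moving_sets_isomorphic)
    with card \<open>i \<noteq> j\<close> show False by simp
  qed
  ultimately show ?thesis
    using q by blast
qed

section \<open>Quandles from flows\<close>

lemma topological_quandle_flow: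
  fixes \<Phi> :: "'g::ab_group_add \<Rightarrow> 'a::topological_space \<Rightarrow> 'a" and \<tau> :: "'a \<Rightarrow> 'g"
  assumes maps_to: "\<And>t x. x \<in> X \<Longrightarrow> \<Phi> t x \<in> X"
    and flow_zero: "\<And>x. x \<in> X \<Longrightarrow> \<Phi> 0 x = x"
    and flow_add: "\<And>s t x. x \<in> X \<Longrightarrow> \<Phi> s (\<Phi> t x) = \<Phi> (s + t) x"
    and cont: "\<And>t. continuous_on X (\<Phi> t)"
    and joint_cont: "continuous_on (X \<times> X) (\<lambda>(x, y). \<Phi> (\<tau> y) x)"
    and time_invariant: "\<And>t y. y \<in> X \<Longrightarrow> \<tau> (\<Phi> t y) = \<tau> y"
    and self_fixed: "\<And>x. x \<in> X \<Longrightarrow> \<Phi> (\<tau> x) x = x"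
  shows "topological_quandle X (\<lambda>x y. \<Phi> (\<tau> y) x)"
  unfolding topological_quandle_def
proof (intro conjI ballI)
  fix y assume "y \<in> X"
  have "homeomorphism X X (\<Phi> (\<tau> y)) (\<Phi> (- \<tau> y))"
    by (rule homeomorphismI) (auto simp: cont maps_to flow_add flow_zero)
  then show "\<exists>g. homeomorphism X X (\<lambda>x. \<Phi> (\<tau> y) x) g" by auto
next
  fix x y z assume "x \<in> X" "y \<in> X" "z \<in> X"
  then show "\<Phi> (\<tau> z) (\<Phi> (\<tau> y) x) = \<Phi> (\<tau> (\<Phi> (\<tau> z) y)) (\<Phi> (\<tau> z) x)"
    by (simp add: time_invariant flow_add add.commute)
qed (use maps_to joint_cont self_fixed in auto)

section \<open>Block quandles on the line\<close>

(* The flow of the logistic equation u' = u (1 - u); it fixes 0 and 1 and preserves (0, 1). *)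
definition logistic_flow :: "real \<Rightarrow> real \<Rightarrow> real" where
  "logistic_flow c t = c * exp t / (1 - c + c * exp t)"

lemma logistic_flow_denominator_pos:
  fixes c t :: real
  assumes "0 \<le> c" "c \<le> 1"
  shows "0 < 1 - c + c * exp t"
proof (cases "c = 1")
  case False
  with assms have "0 < 1 - c" by auto
  moreover have "0 \<le> c * exp t" using assms by simp
  ultimately show ?thesis by linarith
qed simp

lemma logistic_flow_in_unit_interval:
  assumes "0 < c" "c < 1"
  shows "0 < logistic_flow c t" and "logistic_flow c t < 1"
  using logistic_flow_denominator_pos[of c t] assms
  by (simp_all add: logistic_flow_def divide_less_eq_1)

lemma logistic_flow_zero [simp]: "logistic_flow c 0 = c"
  by (simp add: logistic_flow_def)

lemma logistic_flow_add:
  assumes "0 \<le> c" "c \<le> 1"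
  shows "logistic_flow (logistic_flow c s) t = logistic_flow c (s + t)"
proof -
  define D where "D = 1 - c + c * exp s"
  have "0 < D" unfolding D_def using logistic_flow_denominator_pos assms by blast
  have "0 < 1 - c + c * exp (s + t)" using logistic_flow_denominator_pos assms by blast
  have "logistic_flow (logistic_flow c s) t
      = c * exp s / D * exp t / (1 - c * exp s / D + c * exp s / D * exp t)"
    unfolding logistic_flow_def D_def ..
  also have "1 - c * exp s / D + c * exp s / D * exp t = (D - c * exp s + c * exp s * exp t) / D"
    using \<open>0 < D\<close> by (simp add: field_simps)
  also have "D - c * exp s + c * exp s * exp t = 1 - c + c * exp (s + t)"
    by (simp add: D_def exp_add)
  also have "c * exp s / D * exp t / ((1 - c + c * exp (s + t)) / D) = logistic_flow c (s + t)"
    using \<open>0 < D\<close> \<open>0 < 1 - c + c * exp (s + t)\<close>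
    by (simp add: logistic_flow_def exp_add field_simps)
  finally show ?thesis .
qed

lemma logistic_flow_eq_self_iff:
  assumes "0 < c" "c < 1"
  shows "logistic_flow c t = c \<longleftrightarrow> t = 0"
proof
  assume "logistic_flow c t = c"
  then have "c * exp t = c * (1 - c + c * exp t)"
    using logistic_flow_denominator_pos[of c t] assms by (simp add: logistic_flow_def field_simps)
  then have "exp t = 1 - c + c * exp t"
    using assms by simp
  then have "(exp t - 1) * (1 - c) = 0"
    by (simp add: algebra_simps)
  with assms show "t = 0" by simp
qed simp

(* Clamping extends the displacement by 0 outside [0, 1], keeping it continuous. *)
definition logistic_shift :: "real \<Rightarrow> real \<Rightarrow> real" where
  "logistic_shift u t = logistic_flow (max 0 (min 1 u)) t - max 0 (min 1 u)"

definition flow_interval :: "nat \<Rightarrow> real set" where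
  "flow_interval i = {2 * real i <..< 2 * real i + 1}"

definition control_interval :: "nat \<Rightarrow> real set" where
  "control_interval i = {2 * real i + 1 <..< 2 * real i + 2}"

definition block_flow :: "nat \<Rightarrow> (nat \<Rightarrow> real) \<Rightarrow> real \<Rightarrow> real" where
  "block_flow k \<tau> x = x + (\<Sum>i<k. logistic_shift (x - 2 * real i) (\<tau> i))"

definition tent :: "real \<Rightarrow> real" where
  "tent v = max 0 (min v (1 - v))"

definition block_time :: "real \<Rightarrow> nat \<Rightarrow> real" where
  "block_time y i = tent (y - 2 * real i - 1)"

definition block_quandle :: "nat \<Rightarrow> real \<Rightarrow> real \<Rightarrow> real" where
  "block_quandle k x y = block_flow k (block_time y) x"

lemma logistic_shift_eq_0: "u \<le> 0 \<or> 1 \<le> u \<Longrightarrow> logistic_shift u t = 0"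
  by (auto simp: logistic_shift_def logistic_flow_def)

lemma logistic_shift_unit_interval:
  "0 < u \<Longrightarrow> u < 1 \<Longrightarrow> logistic_shift u t = logistic_flow u t - u"
  by (simp add: logistic_shift_def)

lemma continuous_on_logistic_shift [continuous_intros]:
  assumes "continuous_on S f" "continuous_on S g"
  shows "continuous_on S (\<lambda>x. logistic_shift (f x) (g x))"
proof -
  have "1 - max 0 (min 1 (f x)) + max 0 (min 1 (f x)) * exp (g x) \<noteq> 0" for x
    using logistic_flow_denominator_pos[of "max 0 (min 1 (f x))" "g x"] by simp
  then show ?thesis
    unfolding logistic_shift_def logistic_flow_def by (intro continuous_intros assms) auto
qed

lemma tent_eq_0_iff: "tent v = 0 \<longleftrightarrow> v \<le> 0 \<or> 1 \<le> v"
  by (auto simp: tent_def)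

lemma flow_interval_disjoint:
  assumes "x \<in> flow_interval i" "j \<noteq> i"
  shows "x \<notin> flow_interval j"
proof -
  have "real j + 1 \<le> real i \<or> real i + 1 \<le> real j"
    using \<open>j \<noteq> i\<close> by linarith
  with assms(1) show ?thesis by (auto simp: flow_interval_def)
qed

lemma block_time_flow_interval:
  assumes "x \<in> flow_interval j"
  shows "block_time x i = 0"
proof -
  have "real j \<le> real i \<or> real i + 1 \<le> real j"
    by (cases "j \<le> i") linarith+
  with assms show ?thesis by (auto simp: block_time_def tent_eq_0_iff flow_interval_def)
qed

lemma block_flow_flow_interval:
  assumes "i < k" "x \<in> flow_interval i"
  shows "block_flow k \<tau> x = 2 * real i + logistic_flow (x - 2 * real i) (\<tau> i)"
proof -
  have "(\<Sum>j<k. logistic_shift (x - 2 * real j) (\<tau> j))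
      = logistic_shift (x - 2 * real i) (\<tau> i)
        + (\<Sum>j\<in>{..<k} - {i}. logistic_shift (x - 2 * real j) (\<tau> j))"
    using assms by (intro sum.remove) auto
  also have "(\<Sum>j\<in>{..<k} - {i}. logistic_shift (x - 2 * real j) (\<tau> j)) = 0"
    using assms flow_interval_disjoint
    by (intro sum.neutral ballI logistic_shift_eq_0) (auto simp: flow_interval_def)
  finally show ?thesis
    using assms by (simp add: block_flow_def flow_interval_def logistic_shift_unit_interval)
qed

lemma block_flow_outside: "\<forall>i<k. x \<notin> flow_interval i \<Longrightarrow> block_flow k \<tau> x = x"
  by (auto simp: block_flow_def flow_interval_def intro!: sum.neutral logistic_shift_eq_0)

lemma block_flow_in_flow_interval:
  assumes "i < k" "x \<in> flow_interval i"
  shows "block_flow k \<tau> x \<in> flow_interval i"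
proof -
  have "0 < x - 2 * real i" "x - 2 * real i < 1"
    using assms(2) by (auto simp: flow_interval_def)
  then show ?thesis
    using block_flow_flow_interval[OF assms] logistic_flow_in_unit_interval
    by (auto simp: flow_interval_def)
qed

lemma block_flow_mem:
  assumes "\<And>i. i < k \<Longrightarrow> flow_interval i \<subseteq> X" and "x \<in> X"
  shows "block_flow k \<tau> x \<in> X"
  using assms block_flow_in_flow_interval block_flow_outside by (metis subsetD)

lemma block_flow_add: "block_flow k \<sigma> (block_flow k \<tau> x) = block_flow k (\<sigma> + \<tau>) x"
proof (cases "\<exists>i<k. x \<in> flow_interval i")
  case True
  then obtain i where i: "i < k" "x \<in> flow_interval i" by blast
  then have "0 \<le> x - 2 * real i" "x - 2 * real i \<le> 1"
    by (auto simp: flow_interval_def)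
  then show ?thesis
    using block_flow_flow_interval[OF i]
      block_flow_flow_interval[OF i(1) block_flow_in_flow_interval[OF i]]
    by (simp add: logistic_flow_add add.commute)
qed (simp add: block_flow_outside)

lemma block_flow_zero: "block_flow k 0 x = x"
  by (simp add: block_flow_def logistic_shift_def)

lemma continuous_on_block_flow: "continuous_on S (block_flow k \<tau>)"
  unfolding block_flow_def by (intro continuous_intros)

lemma continuous_on_block_quandle: "continuous_on S (\<lambda>(x, y). block_quandle k x y)"
  unfolding block_quandle_def block_flow_def block_time_def tent_def case_prod_unfold
  by (intro continuous_intros)

lemma block_time_block_flow: "block_time (block_flow k \<tau> y) = block_time y"
proof (cases "\<exists>j<k. y \<in> flow_interval j")
  case True
  then obtain j where "j < k" "y \<in> flow_interval j" by blast
  then show ?thesis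
    using block_flow_in_flow_interval block_time_flow_interval by (metis ext)
qed (simp add: block_flow_outside)

lemma block_flow_block_time_self: "block_flow k (block_time x) x = x"
proof (cases "\<exists>j<k. x \<in> flow_interval j")
  case True
  then obtain j where "j < k" "x \<in> flow_interval j" by blast
  then show ?thesis
    using block_flow_flow_interval block_time_flow_interval by simp
qed (simp add: block_flow_outside)

lemma topological_quandle_block_quandle:
  assumes "\<And>i. i < k \<Longrightarrow> flow_interval i \<subseteq> X"
  shows "topological_quandle X (block_quandle k)"
proof -
  have "topological_quandle X (\<lambda>x y. block_flow k (block_time y) x)"
    using assms continuous_on_block_quandle[unfolded block_quandle_def]
    by (intro topological_quandle_flow[where \<Phi> = "block_flow k" and \<tau> = block_time])
      (simp_all add: block_flow_mem block_flow_zero block_flow_add continuous_on_block_flow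
        block_time_block_flow block_flow_block_time_self)
  then show ?thesis
    by (simp add: block_quandle_def[abs_def])
qed

lemma moving_set_block_quandle_flow_interval:
  assumes "control_interval i \<subseteq> X" "i < k" "x \<in> flow_interval i"
  shows "moving_set X (block_quandle k) x = control_interval i"
proof -
  have u: "0 < x - 2 * real i" "x - 2 * real i < 1"
    using assms(3) by (auto simp: flow_interval_def)
  have "block_quandle k x y \<noteq> x \<longleftrightarrow> y \<in> control_interval i" for y
  proof -
    have "block_quandle k x y \<noteq> x \<longleftrightarrow>
        logistic_flow (x - 2 * real i) (block_time y i) \<noteq> x - 2 * real i"
      using block_flow_flow_interval[OF assms(2,3)] by (auto simp: block_quandle_def)
    also have "\<dots> \<longleftrightarrow> block_time y i \<noteq> 0"
      using logistic_flow_eq_self_iff[OF u] by blast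
    also have "\<dots> \<longleftrightarrow> y \<in> control_interval i"
      by (auto simp: block_time_def tent_eq_0_iff control_interval_def)
    finally show ?thesis .
  qed
  then show ?thesis
    using assms(1) by (auto simp: moving_set_def)
qed

lemma moving_set_block_quandle_outside:
  "\<forall>i<k. x \<notin> flow_interval i \<Longrightarrow> moving_set X (block_quandle k) x = {}"
  by (simp add: moving_set_def block_quandle_def block_flow_outside)

lemma moving_sets_block_quandle:
  assumes sub: "\<And>i. i < k \<Longrightarrow> flow_interval i \<union> control_interval i \<subseteq> X" and "0 \<in> X"
  shows "moving_sets X (block_quandle k) = insert {} (control_interval ` {..<k})"
proof (intro equalityI subsetI)
  fix S assume "S \<in> moving_sets X (block_quandle k)"
  then obtain x where "S = moving_set X (block_quandle k) x"
    by (auto simp: moving_sets_def)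
  then show "S \<in> insert {} (control_interval ` {..<k})"
    using moving_set_block_quandle_flow_interval moving_set_block_quandle_outside sub
    by (metis image_eqI insertCI le_sup_iff lessThan_iff)
next
  fix S assume "S \<in> insert {} (control_interval ` {..<k})"
  then consider "S = {}" | i where "i < k" "S = control_interval i" by auto
  then show "S \<in> moving_sets X (block_quandle k)"
  proof cases
    case 1
    have "moving_set X (block_quandle k) 0 = {}"
      by (intro moving_set_block_quandle_outside) (simp add: flow_interval_def)
    then show ?thesis
      using 1 \<open>0 \<in> X\<close> unfolding moving_sets_def by (metis image_eqI)
  next
    case 2
    let ?x = "2 * real i + 1/2"
    have "?x \<in> flow_interval i" by (simp add: flow_interval_def)
    then have "moving_set X (block_quandle k) ?x = control_interval i"
      using 2 sub by (intro moving_set_block_quandle_flow_interval) auto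
    moreover have "?x \<in> X"
      using \<open>?x \<in> flow_interval i\<close> 2 sub by blast
    ultimately show ?thesis
      using 2 unfolding moving_sets_def by (metis image_eqI)
  qed
qed

lemma control_interval_midpoint: "2 * real i + 3/2 \<in> control_interval i"
  by (simp add: control_interval_def)

lemma inj_control_interval: "inj control_interval"
proof (rule injI)
  fix i j assume "control_interval i = control_interval j"
  then have "2 * real i + 3/2 \<in> control_interval j" and "2 * real j + 3/2 \<in> control_interval i"
    using control_interval_midpoint by auto
  then show "i = j" by (auto simp: control_interval_def)
qed

lemma card_moving_sets_block_quandle:
  assumes "\<And>i. i < k \<Longrightarrow> flow_interval i \<union> control_interval i \<subseteq> X" and "0 \<in> X"
  shows "card (moving_sets X (block_quandle k)) = Suc k"
proof -
  have "{} \<notin> control_interval ` {..<k}"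
    using control_interval_midpoint by (metis empty_iff imageE)
  then show ?thesis
    using moving_sets_block_quandle[OF assms] inj_on_subset[OF inj_control_interval]
    by (simp add: card_image)
qed

lemma interval_quandles:
  fixes a b :: real
  assumes "a < b"
  shows "\<exists>f. topological_quandle {a..b} f \<and> card (moving_sets {a..b} f) = k + 2"
proof -
  let ?X = "{0..2 * real (k + 1)}"
  have sub: "flow_interval i \<union> control_interval i \<subseteq> ?X" if "i < k + 1" for i
  proof -
    have "real i + 1 \<le> real (k + 1)" using that by linarith
    then show ?thesis by (auto simp: flow_interval_def control_interval_def)
  qed
  have q: "topological_quandle ?X (block_quandle (k + 1))"
    using sub by (intro topological_quandle_block_quandle) auto
  have "card (moving_sets ?X (block_quandle (k + 1))) = k + 2"
    using card_moving_sets_block_quandle[of "k + 1" ?X] sub by simp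
  moreover have "?X homeomorphic {a..b}"
    using assms by (intro homeomorphic_closed_intervals_real) auto
  ultimately show ?thesis
    using homeomorphic_topological_quandle q by metis
qed

section \<open>Quandles acting on one coordinate\<close>

definition coordinate_quandle :: "'n \<Rightarrow> ('a \<Rightarrow> 'a \<Rightarrow> 'a) \<Rightarrow> 'a ^ 'n \<Rightarrow> 'a ^ 'n \<Rightarrow> 'a ^ 'n" where
  "coordinate_quandle i0 f x y = (\<chi> j. if j = i0 then f (x $ i0) (y $ i0) else x $ j)"

lemma continuous_on_coordinatewise:
  fixes i0 :: "'n::finite" and g :: "'a::topological_space \<Rightarrow> 'a"
  assumes "continuous_on UNIV g"
  shows "continuous_on UNIV (\<lambda>x. \<chi> j. if j = i0 then g (x $ i0) else x $ j :: 'a ^ 'n)"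
proof (rule continuous_on_vec_lambda)
  fix j
  show "continuous_on UNIV (\<lambda>x. if j = i0 then g (x $ i0) else x $ j :: 'a)"
    by (cases "j = i0") (auto intro!: continuous_intros continuous_on_compose2[OF assms])
qed

lemma homeomorphism_coordinatewise:
  fixes i0 :: "'n::finite" and g h :: "'a::topological_space \<Rightarrow> 'a"
  assumes "homeomorphism UNIV UNIV g h"
  shows "homeomorphism UNIV UNIV (\<lambda>x. \<chi> j. if j = i0 then g (x $ i0) else x $ j :: 'a ^ 'n)
           (\<lambda>x. \<chi> j. if j = i0 then h (x $ i0) else x $ j)"
proof -
  have "continuous_on UNIV g" "continuous_on UNIV h" "\<And>u. h (g u) = u" "\<And>u. g (h u) = u"
    using assms by (auto simp: homeomorphism_def)
  then show ?thesis
    by (intro homeomorphismI continuous_on_coordinatewise) (auto simp: vec_eq_iff)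
qed

lemma topological_quandle_coordinate_quandle:
  fixes i0 :: "'n::finite" and f :: "'a::topological_space \<Rightarrow> 'a \<Rightarrow> 'a"
  assumes "topological_quandle UNIV f"
  shows "topological_quandle UNIV (coordinate_quandle i0 f)"
proof -
  have cont: "continuous_on (UNIV \<times> UNIV) (\<lambda>(x, y). f x y)"
    and transl: "\<And>y. \<exists>g. homeomorphism UNIV UNIV (\<lambda>x. f x y) g"
    and distrib: "\<And>x y z. f (f x y) z = f (f x z) (f y z)"
    and idem: "\<And>x. f x x = x"
    using assms unfolding topological_quandle_def by blast+
  show ?thesis
    unfolding topological_quandle_def
  proof (intro conjI ballI)
    have "continuous_on UNIV (\<lambda>p :: ('a ^ 'n) \<times> ('a ^ 'n). (fst p $ i0, snd p $ i0))"
      by (intro continuous_intros)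
    then have f: "continuous_on UNIV (\<lambda>p :: ('a ^ 'n) \<times> ('a ^ 'n). f (fst p $ i0) (snd p $ i0))"
      using continuous_on_compose2[OF cont] by fastforce
    show "continuous_on (UNIV \<times> UNIV) (\<lambda>(x, y). coordinate_quandle i0 f x y)"
      unfolding coordinate_quandle_def case_prod_unfold UNIV_Times_UNIV
    proof (intro continuous_on_vec_lambda)
      fix j
      show "continuous_on UNIV (\<lambda>p. if j = i0 then f (fst p $ i0) (snd p $ i0) else fst p $ j)"
        using f continuous_on_component[OF continuous_on_fst[OF continuous_on_id]]
        by (cases "j = i0") simp_all
    qed
  next
    fix y :: "'a ^ 'n"
    obtain g where "homeomorphism UNIV UNIV (\<lambda>x. f x (y $ i0)) g"
      using transl by blast
    from homeomorphism_coordinatewise[OF this, of i0]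
    show "\<exists>g. homeomorphism UNIV UNIV (\<lambda>x. coordinate_quandle i0 f x y) g"
      unfolding coordinate_quandle_def by blast
  next
    fix x y z :: "'a ^ 'n"
    show "coordinate_quandle i0 f (coordinate_quandle i0 f x y) z =
        coordinate_quandle i0 f (coordinate_quandle i0 f x z) (coordinate_quandle i0 f y z)"
      using distrib[of "x $ i0" "y $ i0" "z $ i0"] by (simp add: coordinate_quandle_def vec_eq_iff)
  qed (simp_all add: coordinate_quandle_def vec_eq_iff idem)
qed

lemma card_moving_sets_coordinate_quandle:
  fixes i0 :: "'n::finite" and f :: "'a \<Rightarrow> 'a \<Rightarrow> 'a"
  shows "card (moving_sets UNIV (coordinate_quandle i0 f)) = card (moving_sets UNIV f)"
proof -
  define p where "p = (\<lambda>x :: 'a ^ 'n. x $ i0)"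
  have "surj p"
    unfolding p_def by (rule surjI[of _ "\<lambda>u. \<chi> j. u"]) simp
  have "moving_set UNIV (coordinate_quandle i0 f) x = p -` moving_set UNIV f (p x)" for x
    by (auto simp: moving_set_def coordinate_quandle_def vec_eq_iff p_def)
  then have "moving_sets UNIV (coordinate_quandle i0 f) = vimage p ` moving_set UNIV f ` range p"
    unfolding moving_sets_def image_image by simp
  also have "\<dots> = vimage p ` moving_sets UNIV f"
    using \<open>surj p\<close> by (simp add: moving_sets_def)
  finally have "moving_sets UNIV (coordinate_quandle i0 f) = vimage p ` moving_sets UNIV f" .
  moreover have "inj_on (vimage p) (moving_sets UNIV f)"
    by (rule inj_on_inverseI[of _ "image p"]) (use \<open>surj p\<close> in simp)
  ultimately show ?thesis
    by (simp add: card_image)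
qed

lemma ball_quandles:
  "\<exists>g :: real ^ 'n \<Rightarrow> real ^ 'n \<Rightarrow> real ^ 'n.
     topological_quandle (ball 0 1) g \<and> card (moving_sets (ball 0 1) g) = k + 2"
proof -
  fix i0 :: 'n
  have "topological_quandle UNIV (block_quandle (k + 1))"
    by (intro topological_quandle_block_quandle) simp
  then have q: "topological_quandle UNIV (coordinate_quandle i0 (block_quandle (k + 1)))"
    by (rule topological_quandle_coordinate_quandle)
  have "card (moving_sets UNIV (block_quandle (k + 1))) = k + 2"
    using card_moving_sets_block_quandle[of "k + 1" UNIV] by simp
  then have "card (moving_sets UNIV (coordinate_quandle i0 (block_quandle (k + 1)))) = k + 2"
    by (simp add: card_moving_sets_coordinate_quandle)
  moreover have "(UNIV :: (real ^ 'n) set) homeomorphic ball (0 :: real ^ 'n) 1"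
    by (rule homeomorphic_sym[THEN iffD1, OF homeomorphic_ball_UNIV]) simp
  ultimately show ?thesis
    using homeomorphic_topological_quandle q by metis
qed

theorem mainTheorem2:
  fixes a b :: real
  assumes "a < b"
  shows "(\<exists>F :: nat \<Rightarrow> (real \<Rightarrow> real \<Rightarrow> real).
            (\<forall>i. topological_quandle {a..b} (F i) \<and> nontrivial_quandle {a..b} (F i)) \<and>
            (\<forall>i j. i \<noteq> j \<longrightarrow> \<not> quandle_isomorphic {a..b} (F i) {a..b} (F j)))
       \<and> (\<exists>G :: nat \<Rightarrow> (real ^ 'n \<Rightarrow> real ^ 'n \<Rightarrow> real ^ 'n).
            (\<forall>i. topological_quandle (ball 0 1) (G i) \<and> nontrivial_quandle (ball 0 1) (G i)) \<and>
            (\<forall>i j. i \<noteq> j \<longrightarrow> \<not> quandle_isomorphic (ball 0 1) (G i) (ball 0 1) (G j)))"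
  using nonisomorphic_topological_quandles[OF interval_quandles[OF assms]]
    nonisomorphic_topological_quandles[OF ball_quandles]
  by blast

end
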